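(* Fix a positive integer $N$ and let $\varphi:\mathbb T\to\mathbb C$ be Riemann integrable. Then for every $\epsilon>0$ and $\delta>0$ there exists $\psi\in\mathscr B(\mathbb T)$ such that $$\limsup_{\substack{q\to\infty\\ d(q)\le N}}\frac{1}{\phi(q)}\Big|\big\{p\in\mathbb Z_q^\times: q^{-1/2}|g_\varphi(p,q)-g_\psi(p,q)|>\delta\big\}\Big|<\epsilon .$$
   Context: $\mathbb T=\mathbb R/\mathbb Z$. $d(q)$ is the number of positive divisors of $q$. $\mathbb Z_q^\times=\{p\in\{1,\dots,q\}:\gcd(p,q)=1\}$, $\phi(q)=|\mathbb Z_q^\times|$. $e(x)=e^{2\pi i x}$, $e_q(x)=e^{2\pi i x/q}$, and $g_\varphi(p,q)=\sum_{h=0}^{q-1}\varphi(h/q)\,e_q(ph^2)$. With $\widehat\psi_k=\int_0^1\psi(x)e(-kx)\,dx$, $\mathscr B(\mathbb T)=\{\psi:\mathbb T\to\mathbb C:\sum_{k\in\mathbb Z}k^2|\widehat\psi_k|<\infty\}$. *)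

theory Defs
  imports "HOL-Analysis.Analysis" "HOL-Number_Theory.Number_Theory"
begin

text \<open>Functions on the torus T = R/Z are represented as 1-periodic functions real => complex.\<close>

definition on_torus :: "(real \<Rightarrow> complex) \<Rightarrow> bool" where
  "on_torus f \<longleftrightarrow> (\<forall>x. f (x + 1) = f x)"

definition riemann_integrable_real01 :: "(real \<Rightarrow> real) \<Rightarrow> bool" where
  "riemann_integrable_real01 f \<longleftrightarrow>
     bounded (f ` {0..1}) \<and>
     (\<forall>e>0. \<exists>(n::nat) (x::nat \<Rightarrow> real).
        x 0 = 0 \<and> x n = 1 \<and> (\<forall>i<n. x i < x (Suc i)) \<and>
        (\<Sum>i<n. (Sup (f ` {x i..x (Suc i)}) - Inf (f ` {x i..x (Suc i)})) * (x (Suc i) - x i)) < e)"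

definition riemann_integrable_torus :: "(real \<Rightarrow> complex) \<Rightarrow> bool" where
  "riemann_integrable_torus f \<longleftrightarrow>
     riemann_integrable_real01 (\<lambda>x. Re (f x)) \<and> riemann_integrable_real01 (\<lambda>x. Im (f x))"

definition e_fun :: "real \<Rightarrow> complex" where
  "e_fun x = exp (2 * pi * \<i> * complex_of_real x)"

definition fourier_coeff :: "(real \<Rightarrow> complex) \<Rightarrow> int \<Rightarrow> complex" where
  "fourier_coeff \<psi> k = integral {0..1} (\<lambda>x. \<psi> x * e_fun (- real_of_int k * x))"

definition B_torus :: "(real \<Rightarrow> complex) set" where
  "B_torus = {\<psi>. on_torus \<psi> \<and> continuous_on UNIV \<psi> \<and>
      (\<lambda>k::int. (real_of_int k)^2 * norm (fourier_coeff \<psi> k)) summable_on UNIV}"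

definition num_divisors :: "nat \<Rightarrow> nat" where
  "num_divisors q = card {d. d dvd q}"

definition units_mod :: "nat \<Rightarrow> nat set" where
  "units_mod q = {p \<in> {1..q}. coprime p q}"

definition gauss_sum :: "(real \<Rightarrow> complex) \<Rightarrow> nat \<Rightarrow> nat \<Rightarrow> complex" where
  "gauss_sum \<phi> p q = (\<Sum>h<q. \<phi> (real h / real q) * e_fun (real (p * h^2) / real q))"

end

theory Submission
  imports Defs
begin

text \<open>
  Write \<open>f = \<phi> - \<psi>\<close>, so that \<open>g\<^sub>\<phi> - g\<^sub>\<psi> = g\<^sub>f\<close>. Orthogonality of the characters \<open>p \<mapsto> e(pk/q)\<close>
  turns the second moment \<open>\<Sum>\<^sub>p |g\<^sub>f(p,q)|\<^sup>2\<close> into \<open>q\<close> times the sum of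
  \<open>f(h/q) cnj(f(h'/q))\<close> over the pairs with \<open>h\<^sup>2 \<equiv> h'\<^sup>2 (mod q)\<close>. Sorting these pairs by a divisor
  \<open>d\<close> of \<open>q\<close> with \<open>d | h' - h\<close> and \<open>q/d | h' + h\<close> bounds the second moment by \<open>q\<close> times a
  sum over \<open>d | q\<close> of \<open>gcd(d, q/d)\<close> times the mean square of \<open>|f|\<close> on a grid of
  \<open>2q / gcd(d, q/d) \<ge> 2\<surd>q\<close> points.

  A Riemann integrable \<open>\<phi>\<close> is approximated in this grid mean square by a trigonometric
  polynomial \<open>\<psi>\<close>: the lower Darboux step function of a fine partition, kept away from the
  partition points, extends (Tietze) to a continuous function on the unit circle, which
  Stone--Weierstrass approximates by a polynomial in \<open>e(x)\<close>. The second moment is then at most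
  \<open>2 q\<^sup>2 d(q) \<eta>\<close>, and Chebyshev's inequality together with \<open>q \<le> \<phi>(q) d(q)\<close> bounds the
  proportion of bad \<open>p\<close> by \<open>2 d(q)\<^sup>2 \<eta> / \<delta>\<^sup>2\<close>.
\<close>

section \<open>The character \<open>e\<close> and trigonometric polynomials\<close>

lemma e_fun_add: "e_fun (x + y) = e_fun x * e_fun y"
  unfolding e_fun_def by (simp add: distrib_left exp_add)

lemma e_fun_of_int [simp]: "e_fun (of_int m) = 1"
  unfolding e_fun_def by (subst exp_eq_1) auto

lemma norm_e_fun [simp]: "norm (e_fun x) = 1"
  unfolding e_fun_def by simp

lemma cnj_e_fun: "cnj (e_fun x) = e_fun (- x)"
  unfolding e_fun_def by (simp add: exp_cnj)

lemma e_fun_of_nat_mult: "e_fun (real n * x) = e_fun x ^ n"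
  unfolding e_fun_def exp_of_nat_mult[symmetric] by (simp add: mult_ac)

lemma continuous_on_e_fun: "continuous_on A e_fun"
  unfolding e_fun_def by (intro continuous_intros)

lemma e_fun_eq_1_iff: "e_fun x = 1 \<longleftrightarrow> x \<in> \<int>"
proof
  assume "e_fun x = 1"
  then obtain n :: int where "2 * pi * x = of_int (2 * n) * pi"
    unfolding e_fun_def by (subst (asm) exp_eq_1) auto
  then show "x \<in> \<int>" by (simp add: Ints_def)
qed (auto elim: Ints_cases)

lemma e_fun_inj_on: "inj_on e_fun {0..<1}"
proof (rule inj_onI)
  fix x y :: real assume x: "x \<in> {0..<1}" and y: "y \<in> {0..<1}" and eq: "e_fun x = e_fun y"
  have "e_fun (x - y) * e_fun y = e_fun y"
    using eq by (simp add: e_fun_add[symmetric])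
  moreover have "e_fun y \<noteq> 0"
    by (metis norm_e_fun norm_zero zero_neq_one)
  ultimately have "x - y \<in> \<int>"
    by (simp add: e_fun_eq_1_iff[symmetric])
  then obtain k :: int where k: "x - y = of_int k" by (auto elim: Ints_cases)
  with x y have "k = 0" by auto
  with k show "x = y" by simp
qed

fun trig_eval :: "(complex \<times> int) list \<Rightarrow> real \<Rightarrow> complex" where
  "trig_eval [] x = 0"
| "trig_eval ((c, k) # cs) x = c * e_fun (of_int k * x) + trig_eval cs x"

definition trig_mult :: "(complex \<times> int) list \<Rightarrow> (complex \<times> int) list \<Rightarrow> (complex \<times> int) list" where
  "trig_mult cs ds = concat (map (\<lambda>(c, k). map (\<lambda>(d, l). (c * d, k + l)) ds) cs)"

lemma trig_eval_append: "trig_eval (cs @ ds) x = trig_eval cs x + trig_eval ds x"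
  by (induction cs x rule: trig_eval.induct) auto

lemma trig_eval_shift:
  "trig_eval (map (\<lambda>(d, l). (c * d, k + l)) ds) x = c * e_fun (of_int k * x) * trig_eval ds x"
  by (induction ds x rule: trig_eval.induct) (auto simp: algebra_simps e_fun_add[symmetric])

lemma trig_eval_mult: "trig_eval (trig_mult cs ds) x = trig_eval cs x * trig_eval ds x"
  unfolding trig_mult_def
  by (induction cs x rule: trig_eval.induct) (auto simp: trig_eval_append trig_eval_shift algebra_simps)

lemma trig_eval_periodic: "trig_eval cs (x + 1) = trig_eval cs x"
  by (induction cs x rule: trig_eval.induct) (simp_all add: distrib_left e_fun_add)

lemma continuous_on_trig_eval: "continuous_on A (trig_eval cs)"
proof (induction cs)
  case (Cons ck cs)
  obtain c k where "ck = (c, k)"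
    by fastforce
  then have "trig_eval (ck # cs) = (\<lambda>x. c * e_fun (of_int k * x) + trig_eval cs x)"
    by auto
  then show ?case
    using Cons.IH by (auto simp: e_fun_def intro!: continuous_intros)
qed simp

definition trig_poly :: "(real \<Rightarrow> complex) \<Rightarrow> bool" where
  "trig_poly f \<longleftrightarrow> (\<exists>cs. f = trig_eval cs)"

lemma trig_poly_const: "trig_poly (\<lambda>x. c)"
  unfolding trig_poly_def by (intro exI[of _ "[(c, 0)]"]) (auto simp: e_fun_def)

lemma trig_poly_add: "trig_poly f \<Longrightarrow> trig_poly g \<Longrightarrow> trig_poly (\<lambda>x. f x + g x)"
  unfolding trig_poly_def by (force simp: fun_eq_iff trig_eval_append[symmetric])

lemma trig_poly_mult: "trig_poly f \<Longrightarrow> trig_poly g \<Longrightarrow> trig_poly (\<lambda>x. f x * g x)"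
  unfolding trig_poly_def by (force simp: fun_eq_iff trig_eval_mult[symmetric])

lemma trig_poly_real_linear:
  assumes "bounded_linear (f :: complex \<Rightarrow> real)"
  shows "trig_poly (\<lambda>x. complex_of_real (f (e_fun x)))"
proof -
  interpret bounded_linear f by fact
  define a where "a = f 1 / 2 + f \<i> / (2 * \<i>)"
  define b where "b = f 1 / 2 - f \<i> / (2 * \<i>)"
  have f_eq: "f z = Re z * f 1 + Im z * f \<i>" for z
    using add[of "Re z *\<^sub>R 1" "Im z *\<^sub>R \<i>"] scale[of "Re z" 1] scale[of "Im z" \<i>]
    by (simp add: scaleR_conv_of_real) (metis complex_eq mult.commute)
  have "complex_of_real (f z) = a * z + b * cnj z" for z
  proof -
    have "complex_of_real (f z) = f 1 * ((z + cnj z) / 2) + f \<i> * ((z - cnj z) / (2 * \<i>))"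
      unfolding complex_add_cnj complex_diff_cnj f_eq[of z] by (simp add: algebra_simps)
    also have "\<dots> = a * z + b * cnj z"
      unfolding a_def b_def by (simp add: field_simps)
    finally show ?thesis .
  qed
  then have "complex_of_real (f (e_fun x)) = trig_eval [(a, 1), (b, -1)] x" for x
    by (simp add: cnj_e_fun)
  then show ?thesis
    unfolding trig_poly_def by blast
qed

lemma trig_poly_real_polynomial_function:
  assumes "real_polynomial_function (p :: complex \<Rightarrow> real)"
  shows "trig_poly (\<lambda>x. complex_of_real (p (e_fun x)))"
  using assms
  by induction (simp_all add: trig_poly_real_linear trig_poly_const trig_poly_add trig_poly_mult)

lemma has_integral_e_fun_of_int:
  assumes "m \<noteq> 0"
  shows "((\<lambda>x. e_fun (of_int m * x)) has_integral 0) {0..1}"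
proof -
  define c where "c = 2 * complex_of_real pi * \<i> * of_int m"
  have "c \<noteq> 0"
    using assms by (simp add: c_def)
  then have "((\<lambda>x. exp (c * of_real x) / c) has_vector_derivative exp (c * of_real x)) (at x within {0..1})" for x
    by (intro has_vector_derivative_real_field) (auto intro!: derivative_eq_intros)
  from fundamental_theorem_of_calculus[of 0 1, OF _ this]
  have "((\<lambda>x. exp (c * of_real x)) has_integral (exp c / c - 1 / c)) {0..1}"
    by simp
  moreover have "exp c = 1" "e_fun (of_int m * x) = exp (c * of_real x)" for x
    using e_fun_of_int[of m] by (simp_all add: e_fun_def c_def mult_ac)
  ultimately show ?thesis
    by simp
qed

lemma fourier_coeff_trig_eval:
  assumes "n \<notin> snd ` set cs"
  shows "fourier_coeff (trig_eval cs) n = 0"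
proof -
  have "((\<lambda>x. trig_eval cs x * e_fun (- real_of_int n * x)) has_integral 0) {0..1}"
    using assms
  proof (induction cs)
    case (Cons ck cs)
    obtain c k where ck: "ck = (c, k)"
      by fastforce
    have "e_fun (of_int k * x) * e_fun (- real_of_int n * x) = e_fun (of_int (k - n) * x)" for x
      by (simp add: e_fun_add[symmetric] algebra_simps)
    then have "trig_eval (ck # cs) x * e_fun (- real_of_int n * x)
        = c * e_fun (of_int (k - n) * x) + trig_eval cs x * e_fun (- real_of_int n * x)" for x
      by (simp add: ck algebra_simps)
    moreover have "((\<lambda>x. c * e_fun (of_int (k - n) * x)) has_integral c * 0) {0..1}"
      using Cons.prems ck by (intro has_integral_mult_right has_integral_e_fun_of_int) auto
    ultimately show ?case
      using has_integral_add[OF _ Cons.IH] Cons.prems by auto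
  qed simp
  then show ?thesis
    unfolding fourier_coeff_def by (rule integral_unique)
qed

lemma trig_poly_in_B_torus:
  assumes "trig_poly f"
  shows "f \<in> B_torus"
proof -
  obtain cs where f: "f = trig_eval cs"
    using assms unfolding trig_poly_def by blast
  have "(\<lambda>k::int. (real_of_int k)\<^sup>2 * norm (fourier_coeff f k)) summable_on UNIV
    \<longleftrightarrow> (\<lambda>k::int. (real_of_int k)\<^sup>2 * norm (fourier_coeff f k)) summable_on (snd ` set cs)"
    by (rule summable_on_cong_neutral) (auto simp: f fourier_coeff_trig_eval)
  then show ?thesis
    unfolding B_torus_def on_torus_def f by (simp add: trig_eval_periodic continuous_on_trig_eval)
qed

section \<open>The second moment of quadratic Gauss sums\<close>

lemma sum_e_fun_roots_of_unity:
  assumes "q > 0"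
  shows "(\<Sum>p\<in>{1..q}. e_fun (real p * (of_int k / real q))) = (if int q dvd k then of_nat q else 0)"
proof -
  define w where "w = e_fun (of_int k / real q)"
  have sum_w: "(\<Sum>p\<in>{1..q}. e_fun (real p * (of_int k / real q))) = (\<Sum>p\<in>{1..q}. w ^ p)"
    unfolding w_def by (simp only: e_fun_of_nat_mult)
  have w_iff: "w = 1 \<longleftrightarrow> int q dvd k"
  proof -
    have "of_int k / real q \<in> \<int> \<longleftrightarrow> int q dvd k"
    proof
      assume "of_int k / real q \<in> \<int>"
      then obtain n where "of_int k / real q = of_int n"
        by (auto elim: Ints_cases)
      then have "of_int k = (of_int (int q * n) :: real)"
        using assms by (simp add: field_simps)
      then show "int q dvd k"
        by (simp only: of_int_eq_iff) simp
    qed (use assms in auto)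
    then show ?thesis
      by (simp add: w_def e_fun_eq_1_iff)
  qed
  show ?thesis
  proof (cases "int q dvd k")
    case False
    have "w ^ q = 1"
      unfolding w_def e_fun_of_nat_mult[symmetric] using assms by simp
    moreover have "(\<Sum>p\<in>{1..q}. w ^ p) = w * (\<Sum>i<q. w ^ i)"
      by (simp add: sum_distrib_left sum.atLeast1_atMost_eq)
    ultimately show ?thesis
      using False w_iff geometric_sum[of w q] sum_w by simp
  qed (use sum_w w_iff in simp)
qed

lemma sum_norm_gauss_sum_sq:
  assumes "q > 0"
  shows "complex_of_real (\<Sum>p\<in>{1..q}. (norm (gauss_sum f p q))\<^sup>2)
    = of_nat q * (\<Sum>h<q. \<Sum>h'<q. if int q dvd int h ^ 2 - int h' ^ 2
                      then f (real h / real q) * cnj (f (real h' / real q)) else 0)"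
proof -
  define a where "a h = f (real h / real q)" for h :: nat
  define c where "c h h' = of_int (int h ^ 2 - int h' ^ 2) / real q" for h h' :: nat
  have term_eq: "(a h * e_fun (real (p * h\<^sup>2) / real q)) * cnj (a h' * e_fun (real (p * h'\<^sup>2) / real q))
      = a h * cnj (a h') * e_fun (real p * c h h')" for p h h'
  proof -
    have "real (p * h\<^sup>2) / real q + - (real (p * h'\<^sup>2) / real q) = real p * c h h'"
      unfolding c_def using assms by (simp add: field_simps)
    then show ?thesis
      by (simp add: cnj_e_fun e_fun_add[symmetric] mult_ac)
  qed
  have "complex_of_real (\<Sum>p\<in>{1..q}. (norm (gauss_sum f p q))\<^sup>2)
      = (\<Sum>p\<in>{1..q}. gauss_sum f p q * cnj (gauss_sum f p q))"
    by (simp only: of_real_sum complex_norm_square)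
  also have "\<dots> = (\<Sum>p\<in>{1..q}. \<Sum>h<q. \<Sum>h'<q. a h * cnj (a h') * e_fun (real p * c h h'))"
    unfolding gauss_sum_def a_def[symmetric] cnj_sum sum_product term_eq ..
  also have "\<dots> = (\<Sum>h<q. \<Sum>h'<q. \<Sum>p\<in>{1..q}. a h * cnj (a h') * e_fun (real p * c h h'))"
    by (subst sum.swap) (intro sum.cong refl sum.swap)
  also have "\<dots> = (\<Sum>h<q. \<Sum>h'<q. a h * cnj (a h') * (\<Sum>p\<in>{1..q}. e_fun (real p * c h h')))"
    by (simp add: sum_distrib_left)
  also have "\<dots> = (\<Sum>h<q. \<Sum>h'<q. a h * cnj (a h') * (if int q dvd int h ^ 2 - int h' ^ 2 then of_nat q else 0))"
    unfolding c_def sum_e_fun_roots_of_unity[OF assms] ..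
  finally show ?thesis
    unfolding a_def by (simp add: sum_distrib_left mult_ac if_distrib cong: if_cong)
qed

lemma norm_sum_symmetric_pairs_le:
  fixes a :: "'a \<Rightarrow> complex"
  assumes "finite A" and sym: "\<And>x y. C x y \<longleftrightarrow> C y x"
  shows "norm (\<Sum>x\<in>A. \<Sum>y\<in>A. if C x y then a x * cnj (a y) else 0)
    \<le> (\<Sum>x\<in>A. (norm (a x))\<^sup>2 * card {y\<in>A. C x y})"
proof -
  let ?b = "\<lambda>x. norm (a x)"
  have "norm (\<Sum>x\<in>A. \<Sum>y\<in>A. if C x y then a x * cnj (a y) else 0)
      \<le> (\<Sum>x\<in>A. \<Sum>y\<in>A. if C x y then ?b x * ?b y else 0)"
    by (rule order.trans[OF norm_sum sum_mono], rule order.trans[OF norm_sum sum_mono])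
       (simp add: norm_mult)
  also have "\<dots> \<le> (\<Sum>x\<in>A. \<Sum>y\<in>A. if C x y then ((?b x)\<^sup>2 + (?b y)\<^sup>2) / 2 else 0)"
  proof (intro sum_mono)
    fix x y
    have "?b x * ?b y \<le> ((?b x)\<^sup>2 + (?b y)\<^sup>2) / 2"
      using sum_squares_bound[of "?b x" "?b y"] by simp
    then show "(if C x y then ?b x * ?b y else 0) \<le> (if C x y then ((?b x)\<^sup>2 + (?b y)\<^sup>2) / 2 else 0)"
      by simp
  qed
  also have "\<dots> = (\<Sum>x\<in>A. \<Sum>y\<in>A. if C x y then (?b x)\<^sup>2 else 0)"
  proof -
    have "(\<Sum>x\<in>A. \<Sum>y\<in>A. if C x y then (?b y)\<^sup>2 else 0) = (\<Sum>x\<in>A. \<Sum>y\<in>A. if C x y then (?b x)\<^sup>2 else 0)"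
      by (subst sum.swap) (simp add: sym)
    moreover have "(if C x y then ((?b x)\<^sup>2 + (?b y)\<^sup>2) / 2 else 0)
        = (if C x y then (?b x)\<^sup>2 else 0) / 2 + (if C x y then (?b y)\<^sup>2 else 0) / 2" for x y
      by simp
    ultimately show ?thesis
      by (simp only: sum.distrib sum_divide_distrib[symmetric])
  qed
  also have "\<dots> = (\<Sum>x\<in>A. (?b x)\<^sup>2 * card {y\<in>A. C x y})"
    using assms(1) by (simp add: sum.If_cases Int_def mult.commute)
  finally show ?thesis .
qed

lemma int_dvd_mult_split:
  fixes a b :: int
  assumes "q > 0" "int q dvd a * b"
  shows "\<exists>d. d dvd q \<and> int d dvd a \<and> int (q div d) dvd b"
proof -
  obtain a' b' where q: "int q = a' * b'" and "a' dvd a" "b' dvd b"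
    using division_decomp[OF assms(2)] by blast
  have "q = nat \<bar>a'\<bar> * nat \<bar>b'\<bar>"
    using q by (simp flip: nat_abs_mult_distrib)
  moreover have "a' \<noteq> 0"
    using q assms(1) by auto
  ultimately show ?thesis
    using \<open>a' dvd a\<close> \<open>b' dvd b\<close> by (intro exI[of _ "nat \<bar>a'\<bar>"]) auto
qed

lemma card_residue_class_le:
  fixes L q r :: nat
  assumes "L dvd q"
  shows "card {x\<in>{..<q}. x mod L = r} \<le> q div L"
proof -
  have "inj_on (\<lambda>x. x div L) {x\<in>{..<q}. x mod L = r}"
    by (rule inj_onI) (metis (mono_tags, lifting) div_mult_mod_eq mem_Collect_eq)
  moreover have "x div L < q div L" if "x < q" for x
  proof -
    obtain t where q: "q = L * t"
      using assms by blast
    with that have "L > 0"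
      by (cases "L = 0") auto
    with that q show ?thesis
      by (simp add: less_mult_imp_div_less mult.commute)
  qed
  then have "(\<lambda>x. x div L) ` {x\<in>{..<q}. x mod L = r} \<subseteq> {..<q div L}"
    by auto
  ultimately have "card {x\<in>{..<q}. x mod L = r} \<le> card {..<q div L}"
    by (rule card_inj_on_le) simp
  then show ?thesis
    by simp
qed

text \<open>All solutions \<open>h'\<close> are congruent modulo \<open>lcm d (q div d)\<close>, a residue class with
  \<open>gcd d (q div d)\<close> elements below \<open>q\<close>.\<close>

lemma card_congruent_pairs_le:
  fixes q d h :: nat
  assumes "q > 0" "d dvd q"
  shows "card {h'\<in>{..<q}. int d dvd int h' - int h \<and> int (q div d) dvd int h' + int h}
    \<le> (if int (gcd d (q div d)) dvd 2 * int h then gcd d (q div d) else 0)"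
proof -
  define e where "e = q div d"
  define m where "m = gcd d e"
  define L where "L = lcm d e"
  define T where "T = {h'\<in>{..<q}. int d dvd int h' - int h \<and> int e dvd int h' + int h}"
  show ?thesis
  proof (cases "T = {}")
    case False
    then obtain h0 where h0: "h0 < q" "int d dvd int h0 - int h" "int e dvd int h0 + int h"
      unfolding T_def by blast
    have "int m dvd int d" "int m dvd int e"
      by (simp_all add: m_def)
    then have "int m dvd (int h0 + int h) - (int h0 - int h)"
      using h0 by (blast intro: dvd_diff dvd_trans)
    then have m_dvd: "int m dvd 2 * int h"
      by (simp add: algebra_simps mult_2)
    have "T \<subseteq> {x\<in>{..<q}. x mod L = h0 mod L}"
    proof
      fix x assume "x \<in> T"
      then have x: "x < q" "int d dvd int x - int h" "int e dvd int x + int h"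
        unfolding T_def by auto
      have "int d dvd int x - int h0" "int e dvd int x - int h0"
        using dvd_diff[OF x(2) h0(2)] dvd_diff[OF x(3) h0(3)] by simp_all
      then have "lcm (int d) (int e) dvd int x - int h0"
        by (rule lcm_least)
      then have "int L dvd int x - int h0"
        by (simp add: L_def)
      then have "x mod L = h0 mod L"
        by (metis mod_eq_dvd_iff of_nat_eq_iff of_nat_mod)
      with x(1) show "x \<in> {x\<in>{..<q}. x mod L = h0 mod L}"
        by simp
    qed
    moreover have "m * L = q"
      using assms(2) by (simp add: m_def L_def e_def prod_gcd_lcm_nat[symmetric])
    then have "L dvd q" "q div L = m"
      using assms(1) by auto
    ultimately have "card T \<le> m"
      using card_residue_class_le[of L q "h0 mod L"] card_mono[of "{x\<in>{..<q}. x mod L = h0 mod L}" T]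
      by simp
    then show ?thesis
      using m_dvd by (simp add: T_def m_def e_def)
  qed (metis T_def e_def card.empty le0)
qed

lemma card_square_congruence_le:
  fixes q h :: nat
  assumes "q > 0"
  shows "card {h'\<in>{..<q}. int q dvd int h ^ 2 - int h' ^ 2}
    \<le> (\<Sum>d | d dvd q. if int (gcd d (q div d)) dvd 2 * int h then gcd d (q div d) else 0)"
proof -
  define T where "T d = {h'\<in>{..<q}. int d dvd int h' - int h \<and> int (q div d) dvd int h' + int h}" for d
  have fin: "finite {d. d dvd q}"
    using assms by simp
  have "{h'\<in>{..<q}. int q dvd int h ^ 2 - int h' ^ 2} \<subseteq> (\<Union>d\<in>{d. d dvd q}. T d)"
  proof
    fix h' assume "h' \<in> {h'\<in>{..<q}. int q dvd int h ^ 2 - int h' ^ 2}"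
    then have h': "h' < q" "int q dvd (int h' - int h) * (int h' + int h)"
      by (auto simp: power2_eq_square algebra_simps dvd_diff_commute)
    from int_dvd_mult_split[OF assms h'(2)] h'(1)
    show "h' \<in> (\<Union>d\<in>{d. d dvd q}. T d)"
      by (auto simp: T_def)
  qed
  then have "card {h'\<in>{..<q}. int q dvd int h ^ 2 - int h' ^ 2} \<le> card (\<Union>d\<in>{d. d dvd q}. T d)"
    by (intro card_mono) (auto simp: T_def intro!: finite_UN_I fin)
  also have "\<dots> \<le> (\<Sum>d | d dvd q. card (T d))"
    using fin by (rule card_UN_le)
  also have "\<dots> \<le> (\<Sum>d | d dvd q. if int (gcd d (q div d)) dvd 2 * int h then gcd d (q div d) else 0)"
    by (intro sum_mono) (use card_congruent_pairs_le[OF assms] in \<open>auto simp: T_def\<close>)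
  finally show ?thesis .
qed

lemma sum_divisible_rescale_le:
  fixes F :: "real \<Rightarrow> real" and q m :: nat
  assumes "\<And>x. F x \<ge> 0" "m > 0" "m dvd 2 * q"
  shows "(\<Sum>h | h < q \<and> int m dvd 2 * int h. F (real h / real q))
    \<le> (\<Sum>j<2 * q div m. F (real j / real (2 * q div m)))"
proof -
  define Q where "Q = 2 * q div m"
  define A where "A = {h. h < q \<and> int m dvd 2 * int h}"
  define g where "g h = 2 * h div m" for h
  have mQ: "m * Q = 2 * q"
    using assms(3) by (simp add: Q_def)
  have g: "2 * h = m * g h" "g h < Q" if "h \<in> A" for h
  proof -
    have "m dvd 2 * h"
      using that unfolding A_def by (metis int_dvd_int_iff of_nat_mult of_nat_numeral mem_Collect_eq)
    then show "2 * h = m * g h"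
      by (simp add: g_def)
    then have "m * g h < m * Q"
      using that mQ by (simp add: A_def)
    then show "g h < Q"
      by simp
  qed
  have "inj_on g A"
    by (rule inj_onI) (metis g(1) mult_cancel1 zero_neq_numeral)
  have F_eq: "F (real h / real q) = F (real (g h) / real Q)" if "h \<in> A" for h
  proof -
    have "real h / real q = real (2 * h) / real (2 * q)"
      by simp
    also have "\<dots> = real (m * g h) / real (m * Q)"
      by (simp only: g(1)[OF that] mQ)
    also have "\<dots> = real (g h) / real Q"
      using assms(2) by simp
    finally show ?thesis
      by simp
  qed
  have "(\<Sum>h\<in>A. F (real h / real q)) = (\<Sum>j\<in>g ` A. F (real j / real Q))"
    using \<open>inj_on g A\<close> F_eq by (simp add: sum.reindex)
  also have "\<dots> \<le> (\<Sum>j<Q. F (real j / real Q))"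
    using g(2) assms(1) by (intro sum_mono2) auto
  finally show ?thesis
    by (simp add: A_def Q_def)
qed

lemma sum_norm_gauss_sum_sq_le_card:
  assumes "q > 0"
  shows "(\<Sum>p\<in>{1..q}. (norm (gauss_sum f p q))\<^sup>2)
    \<le> real q * (\<Sum>h<q. (norm (f (real h / real q)))\<^sup>2 * card {h'\<in>{..<q}. int q dvd int h ^ 2 - int h' ^ 2})"
proof -
  define C where "C h h' \<longleftrightarrow> int q dvd int h ^ 2 - int h' ^ 2" for h h' :: nat
  have C_sym: "C h h' \<longleftrightarrow> C h' h" for h h'
    unfolding C_def by (simp add: dvd_diff_commute)
  have "(\<Sum>p\<in>{1..q}. (norm (gauss_sum f p q))\<^sup>2)
      = norm (complex_of_real (\<Sum>p\<in>{1..q}. (norm (gauss_sum f p q))\<^sup>2))"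
    by (simp only: norm_of_real abs_of_nonneg sum_nonneg zero_le_power2)
  also have "\<dots> = real q * norm (\<Sum>h<q. \<Sum>h'<q. if C h h' then f (real h / real q) * cnj (f (real h' / real q)) else 0)"
    unfolding sum_norm_gauss_sum_sq[OF assms] C_def by (simp add: norm_mult)
  also have "\<dots> \<le> real q * (\<Sum>h<q. (norm (f (real h / real q)))\<^sup>2 * card {h'\<in>{..<q}. C h h'})"
    using norm_sum_symmetric_pairs_le[of "{..<q}" C "\<lambda>h. f (real h / real q)"] C_sym
    by (simp add: mult_left_mono)
  finally show ?thesis
    unfolding C_def .
qed

lemma sum_weighted_card_square_congruence_le:
  fixes F :: "nat \<Rightarrow> real"
  assumes "q > 0" "\<And>h. F h \<ge> 0"
  shows "(\<Sum>h<q. F h * card {h'\<in>{..<q}. int q dvd int h ^ 2 - int h' ^ 2})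
    \<le> (\<Sum>d | d dvd q. real (gcd d (q div d)) * (\<Sum>h | h < q \<and> int (gcd d (q div d)) dvd 2 * int h. F h))"
proof -
  define m where "m d = gcd d (q div d)" for d
  have "(\<Sum>h<q. F h * card {h'\<in>{..<q}. int q dvd int h ^ 2 - int h' ^ 2})
      \<le> (\<Sum>h<q. F h * (\<Sum>d | d dvd q. if int (m d) dvd 2 * int h then real (m d) else 0))"
  proof (rule sum_mono)
    fix h
    have "real (card {h'\<in>{..<q}. int q dvd int h ^ 2 - int h' ^ 2})
        \<le> (\<Sum>d | d dvd q. if int (m d) dvd 2 * int h then real (m d) else 0)"
      using card_square_congruence_le[OF assms(1), of h]
      unfolding m_def of_nat_le_iff[symmetric, where 'a=real] by (simp add: of_nat_sum if_distrib cong: if_cong)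
    then show "F h * card {h'\<in>{..<q}. int q dvd int h ^ 2 - int h' ^ 2}
        \<le> F h * (\<Sum>d | d dvd q. if int (m d) dvd 2 * int h then real (m d) else 0)"
      by (intro mult_left_mono assms(2))
  qed
  also have "\<dots> = (\<Sum>h<q. \<Sum>d\<in>{d\<in>{d. d dvd q}. int (m d) dvd 2 * int h}. real (m d) * F h)"
    using assms(1) by (simp add: sum.inter_filter[of "{d. d dvd q}", simplified] sum_distrib_left
        mult.commute if_distrib cong: if_cong)
  also have "\<dots> = (\<Sum>d | d dvd q. \<Sum>h\<in>{h\<in>{..<q}. int (m d) dvd 2 * int h}. real (m d) * F h)"
    using assms(1) by (intro sum.swap_restrict) auto
  finally show ?thesis
    by (simp add: sum_distrib_left m_def)
qed

lemma sum_norm_gauss_sum_sq_le: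
  fixes f :: "real \<Rightarrow> complex"
  assumes "q > 0"
  shows "(\<Sum>p\<in>{1..q}. (norm (gauss_sum f p q))\<^sup>2)
    \<le> real q * (\<Sum>d | d dvd q. real (gcd d (q div d)) *
          (\<Sum>j<2 * q div gcd d (q div d). (norm (f (real j / real (2 * q div gcd d (q div d)))))\<^sup>2))"
proof -
  define F where "F x = (norm (f x))\<^sup>2" for x
  define m where "m d = gcd d (q div d)" for d
  have "(\<Sum>p\<in>{1..q}. (norm (gauss_sum f p q))\<^sup>2)
      \<le> real q * (\<Sum>h<q. F (real h / real q) * card {h'\<in>{..<q}. int q dvd int h ^ 2 - int h' ^ 2})"
    unfolding F_def by (rule sum_norm_gauss_sum_sq_le_card[OF assms])
  also have "\<dots> \<le> real q * (\<Sum>d | d dvd q. real (m d) * (\<Sum>h | h < q \<and> int (m d) dvd 2 * int h. F (real h / real q)))"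
    unfolding m_def using assms by (intro mult_left_mono sum_weighted_card_square_congruence_le) (simp_all add: F_def)
  also have "\<dots> \<le> real q * (\<Sum>d | d dvd q. real (m d) * (\<Sum>j<2 * q div m d. F (real j / real (2 * q div m d))))"
  proof (rule mult_left_mono, rule sum_mono)
    fix d assume "d \<in> {d. d dvd q}"
    with assms have "m d > 0" "m d dvd 2 * q"
      by (auto simp: m_def intro: dvd_trans[of _ d] dvd_mult2 elim: dvdE)
    then show "real (m d) * (\<Sum>h | h < q \<and> int (m d) dvd 2 * int h. F (real h / real q))
        \<le> real (m d) * (\<Sum>j<2 * q div m d. F (real j / real (2 * q div m d)))"
      by (intro mult_left_mono sum_divisible_rescale_le) (simp_all add: F_def)
  qed simp
  finally show ?thesis
    by (simp add: F_def m_def)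
qed

section \<open>Totient and number of divisors\<close>

lemma two_pow_card_prime_factors_le_num_divisors:
  fixes q :: nat
  assumes "q > 0"
  shows "2 ^ card (prime_factors q) \<le> num_divisors q"
proof -
  have prime_factors_prod: "prime_factors (\<Prod>S) = S" if "S \<subseteq> prime_factors q" for S
  proof -
    have "finite S" "\<And>p. p \<in> S \<Longrightarrow> prime p"
      using that by (auto intro: finite_subset in_prime_factors_imp_prime)
    then show ?thesis
      by (subst prime_factors_prod) (auto simp: prime_prime_factors, metis not_prime_0)
  qed
  have "inj_on (\<lambda>S. \<Prod>S) (Pow (prime_factors q))"
    by (rule inj_onI) (metis PowD prime_factors_prod)
  then have "2 ^ card (prime_factors q) = card ((\<lambda>S. \<Prod>S) ` Pow (prime_factors q))"
    by (simp add: card_image card_Pow)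
  also have "\<dots> \<le> card {d. d dvd q}"
  proof (rule card_mono)
    show "finite {d. d dvd q}"
      using assms by simp
    show "(\<lambda>S. \<Prod>S) ` Pow (prime_factors q) \<subseteq> {d. d dvd q}"
    proof clarify
      fix S assume S: "S \<subseteq> prime_factors q"
      have "\<Prod>S dvd (\<Prod>p\<in>S. p ^ multiplicity p q)"
        using S by (intro prod_dvd_prod) (auto simp: prime_factors_multiplicity)
      also have "\<dots> dvd (\<Prod>p\<in>prime_factors q. p ^ multiplicity p q)"
        using S by (intro prod_dvd_prod_subset) auto
      also have "\<dots> = q"
        using assms by (simp add: prod_prime_factors)
      finally show "\<Prod>S dvd q" .
    qed
  qed
  finally show ?thesis
    unfolding num_divisors_def .
qed

lemma le_totient_mult_num_divisors:
  fixes q :: nat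
  assumes "q > 0"
  shows "real q \<le> real (totient q) * real (num_divisors q)"
proof -
  define k where "k = card (prime_factors q)"
  have "real q * (1 / 2) ^ k = real q * (\<Prod>p\<in>prime_factors q. 1 / 2)"
    by (simp add: k_def)
  also have "\<dots> \<le> real q * (\<Prod>p\<in>prime_factors q. 1 - 1 / real p)"
  proof (intro mult_left_mono prod_mono conjI)
    fix p assume "p \<in> prime_factors q"
    then have "p \<ge> 2"
      by (simp add: prime_ge_2_nat prime_factors_multiplicity)
    then show "1 / 2 \<le> 1 - 1 / real p"
      by (simp add: field_simps)
  qed auto
  also have "\<dots> = real (totient q)"
    by (simp add: totient_formula2)
  finally have "real q \<le> real (totient q) * 2 ^ k"
    by (simp add: field_simps power_one_over)
  also have "(2 :: real) ^ k \<le> real (num_divisors q)"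
    using two_pow_card_prime_factors_le_num_divisors[OF assms] unfolding k_def
    by (metis of_nat_le_iff of_nat_numeral of_nat_power)
  finally show ?thesis
    by (simp add: mult_left_mono)
qed

section \<open>Mean-square approximation on grids\<close>

lemma card_grid_points_ge:
  fixes a b :: real and Q :: nat
  assumes "0 \<le> a" "a \<le> b" "b < 1" "Q > 0"
  shows "(b - a) * real Q - 1 \<le> real (card {j\<in>{..<Q}. a \<le> real j / real Q \<and> real j / real Q \<le> b})"
proof -
  define lo where "lo = nat \<lceil>a * real Q\<rceil>"
  define hi where "hi = nat \<lfloor>b * real Q\<rfloor>"
  have "a * real Q \<ge> 0" "b * real Q \<ge> 0"
    using assms by simp_all
  then have floor_ceiling: "\<lceil>a * real Q\<rceil> \<ge> 0" "\<lfloor>b * real Q\<rfloor> \<ge> 0"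
    by simp_all
  have "j \<in> {j\<in>{..<Q}. a \<le> real j / real Q \<and> real j / real Q \<le> b} \<longleftrightarrow> j \<in> {lo..hi}" for j
  proof -
    have "a \<le> real j / real Q \<longleftrightarrow> lo \<le> j"
      using assms by (simp add: lo_def le_divide_eq ceiling_le_iff nat_le_iff)
    moreover have "real j / real Q \<le> b \<longleftrightarrow> j \<le> hi"
      using assms floor_ceiling by (simp add: hi_def divide_le_eq le_floor_iff le_nat_iff)
    moreover have "j < Q" if "real j \<le> b * real Q"
    proof -
      note that
      also have "b * real Q < real Q"
        using assms by simp
      finally show "j < Q"
        by simp
    qed
    ultimately show ?thesis
      using assms by (auto simp: divide_le_eq)
  qed
  then have "{j\<in>{..<Q}. a \<le> real j / real Q \<and> real j / real Q \<le> b} = {lo..hi}"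
    by blast
  moreover have "(b - a) * real Q - 1 \<le> real (Suc hi - lo)"
  proof -
    have "real (Suc hi - lo) \<ge> real_of_int \<lfloor>b * real Q\<rfloor> + 1 - real_of_int \<lceil>a * real Q\<rceil>"
      using floor_ceiling unfolding lo_def hi_def by (simp add: of_nat_diff) linarith
    then show ?thesis
      by (simp add: algebra_simps) linarith
  qed
  ultimately show ?thesis
    by simp
qed

lemma sum_grid_le:
  fixes F :: "real \<Rightarrow> real" and a b w :: "nat \<Rightarrow> real"
  assumes "Q > 0"
    and ab: "\<And>i. i < n \<Longrightarrow> 0 \<le> a i \<and> a i \<le> b i \<and> b i < 1"
    and w: "\<And>i. i < n \<Longrightarrow> w i \<ge> 0"
    and F: "\<And>y. 0 \<le> y \<Longrightarrow> y < 1 \<Longrightarrow> F y \<le> W - (\<Sum>i<n. if y \<in> {a i..b i} then w i else 0)"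
  shows "(\<Sum>j<Q. F (real j / real Q)) \<le> W * real Q - (\<Sum>i<n. w i * ((b i - a i) * real Q - 1))"
proof -
  define J where "J i = {j\<in>{..<Q}. a i \<le> real j / real Q \<and> real j / real Q \<le> b i}" for i
  have count: "(\<Sum>j<Q. if real j / real Q \<in> {a i..b i} then w i else 0) = w i * real (card (J i))" for i
    unfolding J_def by (simp add: sum.inter_filter[symmetric])
  have "(\<Sum>j<Q. F (real j / real Q)) \<le> (\<Sum>j<Q. W - (\<Sum>i<n. if real j / real Q \<in> {a i..b i} then w i else 0))"
    using assms(1) by (intro sum_mono F) simp_all
  also have "\<dots> = W * real Q - (\<Sum>i<n. w i * real (card (J i)))"
    by (simp only: sum_subtractf, subst sum.swap) (simp add: count[unfolded atLeastAtMost_iff])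
  also have "\<dots> \<le> W * real Q - (\<Sum>i<n. w i * ((b i - a i) * real Q - 1))"
    using ab w card_grid_points_ge[OF _ _ _ assms(1)] unfolding J_def
    by (intro diff_left_mono sum_mono mult_left_mono) auto
  finally show ?thesis .
qed

lemma Suc_less_chain_le:
  fixes x :: "nat \<Rightarrow> 'a::order"
  assumes "\<And>k. k < n \<Longrightarrow> x k < x (Suc k)" "i \<le> j" "j \<le> n"
  shows "x i \<le> x j"
  using assms(2,3)
proof (induction j rule: dec_induct)
  case (step k)
  then show ?case
    using assms(1)[of k] by simp
qed simp

lemma riemann_integrable_real01_step_bounds:
  fixes u :: "real \<Rightarrow> real"
  assumes "riemann_integrable_real01 u" "e > 0" and B: "\<forall>y\<in>{0..1}. \<bar>u y\<bar> \<le> B"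
  obtains x n m M where "x 0 = 0" "x n = 1" "\<And>i. i < n \<Longrightarrow> x i < x (Suc i)"
    "\<And>i y. i < n \<Longrightarrow> y \<in> {x i..x (Suc i)} \<Longrightarrow> m i \<le> u y \<and> u y \<le> M i"
    "\<And>i. i < n \<Longrightarrow> - B \<le> m i \<and> m i \<le> M i \<and> M i \<le> B"
    "(\<Sum>i<n. (M i - m i) * (x (Suc i) - x i)) < e"
proof -
  obtain n x where x: "x 0 = 0" "x n = 1" "\<And>i. i < n \<Longrightarrow> x i < x (Suc i)"
    and osc: "(\<Sum>i<n. (Sup (u ` {x i..x (Suc i)}) - Inf (u ` {x i..x (Suc i)})) * (x (Suc i) - x i)) < e"
    using assms(1,2) unfolding riemann_integrable_real01_def by blast
  have bounded_on: "- B \<le> u y \<and> u y \<le> B" if "i < n" "y \<in> {x i..x (Suc i)}" for i y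
  proof -
    have "0 \<le> x i" "x (Suc i) \<le> 1"
      using Suc_less_chain_le[of n x 0 i] Suc_less_chain_le[of n x "Suc i" n] x that by auto
    then have "y \<in> {0..1}"
      using that(2) by auto
    then show ?thesis
      using bspec[OF B] by (fastforce simp: abs_le_iff)
  qed
  have Inf_Sup: "Inf (u ` {x i..x (Suc i)}) \<le> u y \<and> u y \<le> Sup (u ` {x i..x (Suc i)})"
    if "i < n" "y \<in> {x i..x (Suc i)}" for i y
  proof -
    have "bdd_above (u ` {x i..x (Suc i)})" "bdd_below (u ` {x i..x (Suc i)})"
      using bounded_on[OF that(1)] by (auto intro!: bdd_aboveI[of _ B] bdd_belowI[of _ "- B"])
    then show ?thesis
      using that(2) by (auto intro: cInf_lower cSup_upper)
  qed
  show thesis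
  proof (rule that[OF x Inf_Sup _ osc])
    fix i assume i: "i < n"
    then have xi: "x i \<in> {x i..x (Suc i)}"
      using x(3)[OF i] by auto
    then have "- B \<le> Inf (u ` {x i..x (Suc i)})" "Sup (u ` {x i..x (Suc i)}) \<le> B"
      using bounded_on[OF i] by (auto intro!: cInf_greatest cSup_least)
    then show "- B \<le> Inf (u ` {x i..x (Suc i)}) \<and> Inf (u ` {x i..x (Suc i)}) \<le> Sup (u ` {x i..x (Suc i)})
        \<and> Sup (u ` {x i..x (Suc i)}) \<le> B"
      using Inf_Sup[OF i xi] by linarith
  qed
qed

lemma continuous_extension_constant_on_compacts:
  fixes K :: "nat \<Rightarrow> 'a::{metric_space, second_countable_topology} set" and v :: "nat \<Rightarrow> real"
  assumes "\<And>i. i < n \<Longrightarrow> compact (K i)"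
    and disjoint: "\<And>i j z. i < n \<Longrightarrow> j < n \<Longrightarrow> z \<in> K i \<Longrightarrow> z \<in> K j \<Longrightarrow> i = j"
    and "a \<le> b" "\<And>i. i < n \<Longrightarrow> v i \<in> {a..b}"
  obtains c where "continuous_on UNIV c" "\<And>i z. i < n \<Longrightarrow> z \<in> K i \<Longrightarrow> c z = v i"
    "\<And>z. a \<le> c z \<and> c z \<le> b"
proof -
  define c0 where "c0 z = v (SOME i. i < n \<and> z \<in> K i)" for z
  have c0: "c0 z = v i" if "i < n" "z \<in> K i" for i z
    unfolding c0_def using that disjoint by (metis (mono_tags, lifting) someI_ex)
  have "continuous_on (\<Union>i<n. K i) c0"
  proof (rule continuous_on_closed_Union)
    fix i assume "i \<in> {..<n}"
    then show "continuous_on (K i) c0"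
      using c0 by (intro continuous_on_eq[OF continuous_on_const[of _ "v i"]]) auto
  qed (use assms(1) compact_imp_closed in auto)
  moreover have "closedin (top_of_set UNIV) (\<Union>i<n. K i)"
    using assms(1) by (auto intro!: closed_Union compact_imp_closed)
  ultimately obtain c where c: "continuous_on UNIV c" "\<And>z. z \<in> (\<Union>i<n. K i) \<Longrightarrow> c z = c0 z"
    "\<And>z. c z \<in> cbox a b"
    by (rule Tietze_closed_interval_1) (use \<open>a \<le> b\<close> assms(4) c0 in auto)
  show thesis
  proof (rule that[OF c(1)])
    show "c z = v i" if "i < n" "z \<in> K i" for i z
      using c(2)[of z] c0[OF that] that by auto
    show "a \<le> c z \<and> c z \<le> b" for z
      using c(3)[of z] by simp
  qed
qed

lemma shrunk_partition_intervals:
  fixes x :: "nat \<Rightarrow> real"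
  assumes "x 0 = 0" "x n = 1" "r > 0" and gaps: "\<And>i. i < n \<Longrightarrow> 2 * r < x (Suc i) - x i"
  shows "\<And>i. i < n \<Longrightarrow> 0 \<le> x i + r \<and> x i + r \<le> x (Suc i) - r \<and> x (Suc i) - r < 1"
    and "\<And>i j y. i < n \<Longrightarrow> j < n \<Longrightarrow> y \<in> {x i + r..x (Suc i) - r} \<Longrightarrow> y \<in> {x j + r..x (Suc j) - r} \<Longrightarrow> i = j"
proof -
  have "x i < x (Suc i)" if "i < n" for i
    using gaps[OF that] \<open>r > 0\<close> by linarith
  then have chain: "x i \<le> x j" if "i \<le> j" "j \<le> n" for i j
    by (rule Suc_less_chain_le[of n x, OF _ that])
  show "0 \<le> x i + r \<and> x i + r \<le> x (Suc i) - r \<and> x (Suc i) - r < 1" if "i < n" for i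
    using chain[of 0 i] chain[of "Suc i" n] gaps[OF that] assms(1-3) that by auto
  show "i = j" if "i < n" "j < n" "y \<in> {x i + r..x (Suc i) - r}" "y \<in> {x j + r..x (Suc j) - r}" for i j y
    using chain[of "Suc i" j] chain[of "Suc j" i] \<open>r > 0\<close> that by (cases i j rule: linorder_cases) auto
qed

text \<open>The error is at most \<open>2B(M\<^sub>i - m\<^sub>i)\<close> on the \<open>i\<close>-th shrunk interval and \<open>4B\<^sup>2\<close> elsewhere,
  written as \<open>4B\<^sup>2\<close> minus nonnegative weights so that \<open>sum_grid_le\<close> applies.\<close>

lemma step_sq_error_le:
  fixes u v :: "real \<Rightarrow> real" and x m M :: "nat \<Rightarrow> real"
  assumes "x 0 = 0" "x n = 1" "r > 0" and gaps: "\<And>i. i < n \<Longrightarrow> 2 * r < x (Suc i) - x i"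
    and mM: "\<And>i. i < n \<Longrightarrow> y \<in> {x i..x (Suc i)} \<Longrightarrow> m i \<le> u y \<and> u y \<le> M i"
    and mM_B: "\<And>i. i < n \<Longrightarrow> - B \<le> m i \<and> m i \<le> M i \<and> M i \<le> B"
    and "\<bar>u y\<bar> \<le> B" "\<bar>v y\<bar> \<le> B"
    and v_step: "\<And>i. i < n \<Longrightarrow> y \<in> {x i + r..x (Suc i) - r} \<Longrightarrow> v y = m i"
  shows "(u y - v y)\<^sup>2
    \<le> 4 * B\<^sup>2 - (\<Sum>i<n. if y \<in> {x i + r..x (Suc i) - r} then 4 * B\<^sup>2 - 2 * B * (M i - m i) else 0)"
proof (cases "\<exists>i<n. y \<in> {x i + r..x (Suc i) - r}")
  case True
  then obtain i where i: "i < n" "y \<in> {x i + r..x (Suc i) - r}"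
    by blast
  have "y \<notin> {x j + r..x (Suc j) - r}" if "j < n" "j \<noteq> i" for j
    using shrunk_partition_intervals(2)[of x n r i j y] assms(1-3) gaps i that by blast
  then have "(\<Sum>j<n. if y \<in> {x j + r..x (Suc j) - r} then 4 * B\<^sup>2 - 2 * B * (M j - m j) else 0)
      = (\<Sum>j<n. if j = i then 4 * B\<^sup>2 - 2 * B * (M j - m j) else 0)"
    using i(2) by (intro sum.cong) auto
  also have "\<dots> = 4 * B\<^sup>2 - 2 * B * (M i - m i)"
    using i(1) by simp
  finally have sum_eq: "(\<Sum>j<n. if y \<in> {x j + r..x (Suc j) - r} then 4 * B\<^sup>2 - 2 * B * (M j - m j) else 0)
      = 4 * B\<^sup>2 - 2 * B * (M i - m i)" .
  have "y \<in> {x i..x (Suc i)}"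
    using i(2) \<open>r > 0\<close> by auto
  then have "0 \<le> u y - m i" "u y - m i \<le> M i - m i" "u y - m i \<le> 2 * B"
    using mM[OF i(1)] mM_B[OF i(1)] \<open>\<bar>u y\<bar> \<le> B\<close> by auto
  then have "(u y - m i)\<^sup>2 \<le> (M i - m i) * (2 * B)"
    unfolding power2_eq_square by (intro mult_mono) auto
  then show ?thesis
    using v_step[OF i] sum_eq by (simp add: algebra_simps)
next
  case False
  then have "(\<Sum>i<n. if y \<in> {x i + r..x (Suc i) - r} then 4 * B\<^sup>2 - 2 * B * (M i - m i) else 0) = 0"
    by (intro sum.neutral) auto
  moreover have "\<bar>u y - v y\<bar> \<le> \<bar>2 * B\<bar>"
    using assms(7,8) by simp
  then have "(u y - v y)\<^sup>2 \<le> (2 * B)\<^sup>2"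
    by (simp only: abs_le_square_iff)
  ultimately show ?thesis
    by (simp add: power_mult_distrib)
qed

lemma sum_grid_step_error_le:
  fixes u v :: "real \<Rightarrow> real" and x m M :: "nat \<Rightarrow> real"
  assumes "Q > 0" "B > 0" "r > 0"
    and x: "x 0 = 0" "x n = 1" "\<And>i. i < n \<Longrightarrow> 2 * r < x (Suc i) - x i"
    and mM: "\<And>i y. i < n \<Longrightarrow> y \<in> {x i..x (Suc i)} \<Longrightarrow> m i \<le> u y \<and> u y \<le> M i"
    and mM_B: "\<And>i. i < n \<Longrightarrow> - B \<le> m i \<and> m i \<le> M i \<and> M i \<le> B"
    and u_B: "\<forall>y\<in>{0..1}. \<bar>u y\<bar> \<le> B" and v_B: "\<And>y. \<bar>v y\<bar> \<le> B"
    and v_step: "\<And>i y. i < n \<Longrightarrow> y \<in> {x i + r..x (Suc i) - r} \<Longrightarrow> v y = m i"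
  shows "(\<Sum>j<Q. (u (real j / real Q) - v (real j / real Q))\<^sup>2)
    \<le> 2 * B * real Q * (\<Sum>i<n. (M i - m i) * (x (Suc i) - x i)) + (2 * r * real Q + 1) * (4 * B\<^sup>2 * real n)"
proof -
  define w where "w i = 4 * B\<^sup>2 - 2 * B * (M i - m i)" for i
  have w: "0 \<le> w i \<and> w i \<le> 4 * B\<^sup>2" if "i < n" for i
    using mM_B[OF that] \<open>B > 0\<close> mult_left_mono[of "M i - m i" "2 * B" "2 * B"]
    by (auto simp: w_def power2_eq_square)
  have "(u y - v y)\<^sup>2 \<le> 4 * B\<^sup>2 - (\<Sum>i<n. if y \<in> {x i + r..x (Suc i) - r} then w i else 0)"
    if "0 \<le> y" "y < 1" for y
    unfolding w_def using x(1,2) \<open>r > 0\<close> x(3) mM mM_B bspec[OF u_B, of y] v_B that v_step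
    by (intro step_sq_error_le) auto
  then have "(\<Sum>j<Q. (u (real j / real Q) - v (real j / real Q))\<^sup>2)
      \<le> 4 * B\<^sup>2 * real Q - (\<Sum>i<n. w i * (((x (Suc i) - r) - (x i + r)) * real Q - 1))"
    using w shrunk_partition_intervals(1)[OF x(1,2) \<open>r > 0\<close> x(3)]
    by (intro sum_grid_le \<open>Q > 0\<close>) auto
  also have "\<dots> = 4 * B\<^sup>2 * real Q * (1 - (\<Sum>i<n. x (Suc i) - x i))
      + 2 * B * real Q * (\<Sum>i<n. (M i - m i) * (x (Suc i) - x i)) + (2 * r * real Q + 1) * (\<Sum>i<n. w i)"
    by (simp add: w_def algebra_simps sum_subtractf sum.distrib sum_distrib_left sum_distrib_right)
  also have "(\<Sum>i<n. x (Suc i) - x i) = 1"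
    using sum_lessThan_telescope[of x n] x by simp
  also have "(\<Sum>i<n. w i) \<le> 4 * B\<^sup>2 * real n"
    using sum_mono[of "{..<n}" w "\<lambda>_. 4 * B\<^sup>2"] w by (simp add: mult.commute)
  finally show ?thesis
    using \<open>r > 0\<close> by (simp add: mult_left_mono)
qed

lemma continuous_circle_step_extension:
  fixes x v :: "nat \<Rightarrow> real"
  assumes x: "x 0 = 0" "x n = 1" "r > 0" "\<And>i. i < n \<Longrightarrow> 2 * r < x (Suc i) - x i"
    and v: "\<And>i. i < n \<Longrightarrow> \<bar>v i\<bar> \<le> B"
  obtains c :: "complex \<Rightarrow> real" where "continuous_on UNIV c"
    "\<And>i y. i < n \<Longrightarrow> y \<in> {x i + r..x (Suc i) - r} \<Longrightarrow> c (e_fun y) = v i" "\<And>z. \<bar>c z\<bar> \<le> B"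
proof -
  have bounds: "0 \<le> x i + r \<and> x i + r \<le> x (Suc i) - r \<and> x (Suc i) - r < 1" if "i < n" for i
    using shrunk_partition_intervals(1)[of x n r i] x that by blast
  have "n > 0"
    using x by (cases n) auto
  then have "- B \<le> B"
    using v[of 0] by simp
  obtain c where c: "continuous_on UNIV c" "\<And>i z. i < n \<Longrightarrow> z \<in> e_fun ` {x i + r..x (Suc i) - r} \<Longrightarrow> c z = v i"
    and c_B: "\<And>z. - B \<le> c z \<and> c z \<le> B"
  proof (rule continuous_extension_constant_on_compacts[where K = "\<lambda>i. e_fun ` {x i + r..x (Suc i) - r}" and v = v,
        OF _ _ \<open>- B \<le> B\<close>])
    show "compact (e_fun ` {x i + r..x (Suc i) - r})" for i
      by (intro compact_continuous_image continuous_on_e_fun) simp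
    show "i = j" if ij: "i < n" "j < n"
      and z: "z \<in> e_fun ` {x i + r..x (Suc i) - r}" "z \<in> e_fun ` {x j + r..x (Suc j) - r}" for i j z
    proof -
      obtain y y' where y: "y \<in> {x i + r..x (Suc i) - r}" "y' \<in> {x j + r..x (Suc j) - r}" "e_fun y = e_fun y'"
        using z by auto
      then have "y = y'"
        using bounds[OF ij(1)] bounds[OF ij(2)] by (intro inj_onD[OF e_fun_inj_on]) auto
      then show ?thesis
        using shrunk_partition_intervals(2)[of x n r i j y] x ij y by blast
    qed
    show "v i \<in> {- B..B}" if "i < n" for i
      using v[OF that] by (simp add: abs_le_iff)
  qed (rule that)
  have "\<bar>c z\<bar> \<le> B" for z
    using c_B[of z] by (simp add: abs_le_iff)
  with c show thesis
    by (intro that) auto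
qed

lemma exists_gap_radius:
  fixes x :: "nat \<Rightarrow> real"
  assumes "\<And>i. i < n \<Longrightarrow> x i < x (Suc i)" "\<rho> > 0"
  obtains r where "r > 0" "r \<le> \<rho>" "\<And>i. i < n \<Longrightarrow> 2 * r < x (Suc i) - x i"
proof -
  define r where "r = Min (insert \<rho> ((\<lambda>i. (x (Suc i) - x i) / 3) ` {..<n}))"
  have "r > 0"
    using assms unfolding r_def by (subst Min_gr_iff) auto
  moreover have "r \<le> \<rho>"
    unfolding r_def by simp
  moreover have "2 * r < x (Suc i) - x i" if "i < n" for i
  proof -
    have "r \<le> (x (Suc i) - x i) / 3"
      unfolding r_def using that by (intro Min_le) auto
    with assms(1)[OF that] show ?thesis
      by (simp add: field_simps)
  qed
  ultimately show thesis
    by (rule that)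
qed

lemma riemann_integrable_real01_grid_approx_continuous:
  fixes u :: "real \<Rightarrow> real"
  assumes "riemann_integrable_real01 u" "\<eta> > 0"
  obtains c :: "complex \<Rightarrow> real" where "continuous_on UNIV c"
    "eventually (\<lambda>Q. (\<Sum>j<Q. (u (real j / real Q) - c (e_fun (real j / real Q)))\<^sup>2) \<le> \<eta> * real Q) sequentially"
proof -
  obtain B where "B > 0" and B: "\<forall>y\<in>{0..1}. \<bar>u y\<bar> \<le> B"
    using assms(1) unfolding riemann_integrable_real01_def bounded_pos by auto
  have "\<eta> / (6 * B) > 0"
    using assms(2) \<open>B > 0\<close> by simp
  obtain x n m M where x: "x 0 = 0" "x n = 1" "\<And>i. i < n \<Longrightarrow> x i < x (Suc i)"
    and mM: "\<And>i y. i < n \<Longrightarrow> y \<in> {x i..x (Suc i)} \<Longrightarrow> m i \<le> u y \<and> u y \<le> M i"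
    and mM_B: "\<And>i. i < n \<Longrightarrow> - B \<le> m i \<and> m i \<le> M i \<and> M i \<le> B"
    and osc: "(\<Sum>i<n. (M i - m i) * (x (Suc i) - x i)) < \<eta> / (6 * B)"
    by (rule riemann_integrable_real01_step_bounds[OF assms(1) \<open>\<eta> / (6 * B) > 0\<close> B]) (rule that)
  have "n > 0"
    using x by (cases n) auto
  then have "\<eta> / (24 * B\<^sup>2 * real n) > 0"
    using assms(2) \<open>B > 0\<close> by simp
  then obtain r where "r > 0" and r_small: "r \<le> \<eta> / (24 * B\<^sup>2 * real n)"
    and gaps: "\<And>i. i < n \<Longrightarrow> 2 * r < x (Suc i) - x i"
    using exists_gap_radius[of n x] x(3) by blast
  have "\<bar>m i\<bar> \<le> B" if "i < n" for i
    using mM_B[OF that] by auto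
  then obtain c where c: "continuous_on UNIV c"
    and c_step: "\<And>i y. i < n \<Longrightarrow> y \<in> {x i + r..x (Suc i) - r} \<Longrightarrow> c (e_fun y) = m i"
    and c_B: "\<And>z. \<bar>c z\<bar> \<le> B"
    using continuous_circle_step_extension[OF x(1,2) \<open>r > 0\<close> gaps] by blast
  have "(\<Sum>j<Q. (u (real j / real Q) - c (e_fun (real j / real Q)))\<^sup>2) \<le> \<eta> * real Q"
    if Q: "nat \<lceil>12 * B\<^sup>2 * real n / \<eta>\<rceil> + 1 \<le> Q" for Q
  proof -
    have "Q > 0"
      using Q by simp
    have "12 * B\<^sup>2 * real n / \<eta> \<le> real Q"
      using Q real_nat_ceiling_ge[of "12 * B\<^sup>2 * real n / \<eta>"] by linarith
    then have Q_large: "4 * B\<^sup>2 * real n \<le> \<eta> * real Q / 3"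
      using assms(2) by (simp add: divide_le_eq mult.commute)
    define S where "S = (\<Sum>i<n. (M i - m i) * (x (Suc i) - x i))"
    have S_small: "2 * B * S \<le> \<eta> / 3"
      using osc \<open>B > 0\<close> by (simp add: S_def field_simps)
    have r_small': "8 * r * B\<^sup>2 * real n \<le> \<eta> / 3"
      using r_small \<open>B > 0\<close> \<open>n > 0\<close> by (simp add: field_simps)
    have "(\<Sum>j<Q. (u (real j / real Q) - c (e_fun (real j / real Q)))\<^sup>2)
        \<le> 2 * B * real Q * S + (2 * r * real Q + 1) * (4 * B\<^sup>2 * real n)"
      unfolding S_def using x(1,2) gaps mM mM_B B c_B c_step
      by (rule sum_grid_step_error_le[OF \<open>Q > 0\<close> \<open>B > 0\<close> \<open>r > 0\<close>, where v = "\<lambda>y. c (e_fun y)"])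
    also have "\<dots> = real Q * (2 * B * S) + real Q * (8 * r * B\<^sup>2 * real n) + 4 * B\<^sup>2 * real n"
      by (simp add: algebra_simps)
    also have "\<dots> \<le> real Q * (\<eta> / 3) + real Q * (\<eta> / 3) + \<eta> * real Q / 3"
      using S_small r_small' Q_large by (intro add_mono mult_left_mono) auto
    finally show ?thesis
      by simp
  qed
  then have "eventually (\<lambda>Q. (\<Sum>j<Q. (u (real j / real Q) - c (e_fun (real j / real Q)))\<^sup>2) \<le> \<eta> * real Q)
      sequentially"
    unfolding eventually_sequentially by blast
  with c show thesis
    by (rule that)
qed

lemma power2_add_le: "(a + b)\<^sup>2 \<le> 2 * a\<^sup>2 + 2 * (b :: real)\<^sup>2"
  using sum_squares_bound[of a b] by (simp add: power2_sum)

lemma riemann_integrable_real01_grid_approx_polynomial: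
  fixes u :: "real \<Rightarrow> real"
  assumes "riemann_integrable_real01 u" "\<eta> > 0"
  obtains p :: "complex \<Rightarrow> real" where "real_polynomial_function p"
    "eventually (\<lambda>Q. (\<Sum>j<Q. (u (real j / real Q) - p (e_fun (real j / real Q)))\<^sup>2) \<le> \<eta> * real Q) sequentially"
proof -
  obtain c where c: "continuous_on UNIV c"
    and c_approx: "eventually (\<lambda>Q. (\<Sum>j<Q. (u (real j / real Q) - c (e_fun (real j / real Q)))\<^sup>2) \<le> \<eta> / 4 * real Q) sequentially"
    using riemann_integrable_real01_grid_approx_continuous[OF assms(1), of "\<eta> / 4"] assms(2) by auto
  obtain p where p: "real_polynomial_function p" and p_approx: "\<And>z. z \<in> sphere 0 1 \<Longrightarrow> \<bar>c z - p z\<bar> < sqrt (\<eta> / 4)"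
    using Stone_Weierstrass_real_polynomial_function[of "sphere (0::complex) 1" c "sqrt (\<eta> / 4)"]
      continuous_on_subset[OF c] assms(2) by auto
  have pointwise: "(u y - p (e_fun y))\<^sup>2 \<le> 2 * (u y - c (e_fun y))\<^sup>2 + \<eta> / 2" for y
  proof -
    have "\<bar>c (e_fun y) - p (e_fun y)\<bar> \<le> sqrt (\<eta> / 4)"
      using p_approx[of "e_fun y"] by simp
    then have "(c (e_fun y) - p (e_fun y))\<^sup>2 \<le> \<eta> / 4"
      using power_mono[of _ _ 2] assms(2) by fastforce
    moreover have "(u y - p (e_fun y))\<^sup>2 \<le> 2 * (u y - c (e_fun y))\<^sup>2 + 2 * (c (e_fun y) - p (e_fun y))\<^sup>2"
      using power2_add_le[of "u y - c (e_fun y)" "c (e_fun y) - p (e_fun y)"] by simp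
    ultimately show ?thesis
      by linarith
  qed
  have sum_bound: "(\<Sum>j<Q. (u (real j / real Q) - p (e_fun (real j / real Q)))\<^sup>2)
      \<le> 2 * (\<Sum>j<Q. (u (real j / real Q) - c (e_fun (real j / real Q)))\<^sup>2) + \<eta> / 2 * real Q" for Q
  proof -
    have "(\<Sum>j<Q. (u (real j / real Q) - p (e_fun (real j / real Q)))\<^sup>2)
        \<le> (\<Sum>j<Q. 2 * (u (real j / real Q) - c (e_fun (real j / real Q)))\<^sup>2 + \<eta> / 2)"
      by (intro sum_mono pointwise)
    then show ?thesis
      by (simp add: sum.distrib sum_distrib_left mult.commute)
  qed
  have "eventually (\<lambda>Q. (\<Sum>j<Q. (u (real j / real Q) - p (e_fun (real j / real Q)))\<^sup>2) \<le> \<eta> * real Q) sequentially"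
    using c_approx
  proof eventually_elim
    case (elim Q)
    then show ?case
      using sum_bound[of Q] by linarith
  qed
  with p show thesis
    by (rule that)
qed

lemma riemann_integrable_torus_grid_approx_trig_poly:
  assumes "riemann_integrable_torus \<phi>" "\<eta> > 0"
  obtains \<psi> where "trig_poly \<psi>"
    "eventually (\<lambda>Q. (\<Sum>j<Q. (norm (\<phi> (real j / real Q) - \<psi> (real j / real Q)))\<^sup>2) \<le> \<eta> * real Q) sequentially"
proof -
  have "\<eta> / 2 > 0"
    using assms(2) by simp
  have re: "riemann_integrable_real01 (\<lambda>x. Re (\<phi> x))" and im: "riemann_integrable_real01 (\<lambda>x. Im (\<phi> x))"
    using assms(1) unfolding riemann_integrable_torus_def by auto
  obtain p1 where p1: "real_polynomial_function p1"
    and approx1: "eventually (\<lambda>Q. (\<Sum>j<Q. (Re (\<phi> (real j / real Q)) - p1 (e_fun (real j / real Q)))\<^sup>2) \<le> \<eta> / 2 * real Q) sequentially"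
    by (rule riemann_integrable_real01_grid_approx_polynomial[OF re \<open>\<eta> / 2 > 0\<close>]) (rule that)
  obtain p2 where p2: "real_polynomial_function p2"
    and approx2: "eventually (\<lambda>Q. (\<Sum>j<Q. (Im (\<phi> (real j / real Q)) - p2 (e_fun (real j / real Q)))\<^sup>2) \<le> \<eta> / 2 * real Q) sequentially"
    by (rule riemann_integrable_real01_grid_approx_polynomial[OF im \<open>\<eta> / 2 > 0\<close>]) (rule that)
  define \<psi> where "\<psi> x = complex_of_real (p1 (e_fun x)) + \<i> * complex_of_real (p2 (e_fun x))" for x
  have "trig_poly \<psi>"
    unfolding \<psi>_def by (intro trig_poly_add trig_poly_mult trig_poly_const trig_poly_real_polynomial_function p1 p2)
  have norm_diff: "(norm (\<phi> y - \<psi> y))\<^sup>2 = (Re (\<phi> y) - p1 (e_fun y))\<^sup>2 + (Im (\<phi> y) - p2 (e_fun y))\<^sup>2" for y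
    by (simp add: \<psi>_def cmod_power2)
  have "eventually (\<lambda>Q. (\<Sum>j<Q. (norm (\<phi> (real j / real Q) - \<psi> (real j / real Q)))\<^sup>2) \<le> \<eta> * real Q) sequentially"
    using approx1 approx2 by eventually_elim (simp add: norm_diff sum.distrib)
  with \<open>trig_poly \<psi>\<close> show thesis
    by (rule that)
qed

section \<open>Large values of Gauss sums\<close>

lemma gauss_sum_diff: "gauss_sum f p q - gauss_sum g p q = gauss_sum (\<lambda>x. f x - g x) p q"
  unfolding gauss_sum_def by (simp add: sum_subtractf left_diff_distrib)

lemma le_two_mult_div_gcd_div:
  fixes q d Q :: nat
  assumes "q > 0" "d dvd q" "Q * Q \<le> q"
  shows "Q \<le> 2 * q div gcd d (q div d)"
proof -
  define m where "m = gcd d (q div d)"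
  define Q' where "Q' = 2 * q div m"
  have "q div d > 0" "d > 0"
    using assms by (auto elim!: dvdE)
  then have "m > 0" "m * m \<le> d * (q div d)"
    unfolding m_def by (intro mult_le_mono | simp add: gcd_le1_nat gcd_le2_nat)+
  then have "m * m \<le> q"
    using assms(2) by simp
  have "m dvd 2 * q"
    using assms(2) unfolding m_def by (metis dvd_mult dvd_trans gcd_dvd1)
  then have mQ': "m * Q' = 2 * q"
    by (simp add: Q'_def)
  with \<open>m * m \<le> q\<close> have "m * m \<le> m * Q'"
    by linarith
  then have "m \<le> Q'"
    using \<open>m > 0\<close> by simp
  then have "Q * Q \<le> Q' * Q'"
    using mQ' assms(3) mult_le_mono1[of m Q' Q'] by linarith
  then show ?thesis
    unfolding Q'_def m_def using power2_le_imp_le[of Q] by (simp add: power2_eq_square)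
qed

lemma sum_norm_gauss_sum_sq_le_of_grid_bound:
  fixes f :: "real \<Rightarrow> complex"
  assumes "q > 0" "Q0 * Q0 \<le> q"
    and grid: "\<And>Q. Q0 \<le> Q \<Longrightarrow> (\<Sum>j<Q. (norm (f (real j / real Q)))\<^sup>2) \<le> \<eta> * real Q"
  shows "(\<Sum>p\<in>{1..q}. (norm (gauss_sum f p q))\<^sup>2) \<le> 2 * (real q)\<^sup>2 * real (num_divisors q) * \<eta>"
proof -
  have "(\<Sum>p\<in>{1..q}. (norm (gauss_sum f p q))\<^sup>2)
      \<le> real q * (\<Sum>d | d dvd q. real (gcd d (q div d)) *
          (\<Sum>j<2 * q div gcd d (q div d). (norm (f (real j / real (2 * q div gcd d (q div d)))))\<^sup>2))"
    by (rule sum_norm_gauss_sum_sq_le[OF assms(1)])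
  also have "\<dots> \<le> real q * (\<Sum>d | d dvd q. 2 * real q * \<eta>)"
  proof (rule mult_left_mono, rule sum_mono)
    fix d assume "d \<in> {d. d dvd q}"
    then have d: "d dvd q"
      by simp
    define m where "m = gcd d (q div d)"
    have "m dvd 2 * q"
      using d unfolding m_def by (metis dvd_mult dvd_trans gcd_dvd1)
    then have "real m * real (2 * q div m) = 2 * real q"
      by (metis dvd_mult_div_cancel of_nat_mult of_nat_numeral)
    moreover have "Q0 \<le> 2 * q div m"
      unfolding m_def using le_two_mult_div_gcd_div[OF assms(1) d assms(2)] .
    ultimately have "real m * (\<Sum>j<2 * q div m. (norm (f (real j / real (2 * q div m))))\<^sup>2) \<le> 2 * real q * \<eta>"
      using mult_left_mono[OF grid, of "2 * q div m" "real m"] by (simp add: mult_ac)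
    then show "real (gcd d (q div d)) *
        (\<Sum>j<2 * q div gcd d (q div d). (norm (f (real j / real (2 * q div gcd d (q div d)))))\<^sup>2) \<le> 2 * real q * \<eta>"
      by (simp add: m_def)
  qed simp
  also have "\<dots> = 2 * (real q)\<^sup>2 * real (num_divisors q) * \<eta>"
    by (simp add: num_divisors_def power2_eq_square mult_ac)
  finally show ?thesis .
qed

lemma card_large_gauss_sum_le:
  assumes "q > 0" "\<delta> > 0"
  shows "real (card {p \<in> units_mod q. norm (gauss_sum f p q) / sqrt (real q) > \<delta>}) * (\<delta>\<^sup>2 * real q)
    \<le> (\<Sum>p\<in>{1..q}. (norm (gauss_sum f p q))\<^sup>2)"
proof -
  define A where "A = {p \<in> units_mod q. norm (gauss_sum f p q) / sqrt (real q) > \<delta>}"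
  have "real (card A) * (\<delta>\<^sup>2 * real q) = (\<Sum>p\<in>A. \<delta>\<^sup>2 * real q)"
    by simp
  also have "\<dots> \<le> (\<Sum>p\<in>A. (norm (gauss_sum f p q))\<^sup>2)"
  proof (rule sum_mono)
    fix p assume "p \<in> A"
    then have "\<delta> * sqrt (real q) < norm (gauss_sum f p q)"
      using assms(1) by (simp add: A_def less_divide_eq)
    then have "(\<delta> * sqrt (real q))\<^sup>2 \<le> (norm (gauss_sum f p q))\<^sup>2"
      using assms(2) by (intro power_mono) auto
    then show "\<delta>\<^sup>2 * real q \<le> (norm (gauss_sum f p q))\<^sup>2"
      by (simp add: power_mult_distrib)
  qed
  also have "\<dots> \<le> (\<Sum>p\<in>{1..q}. (norm (gauss_sum f p q))\<^sup>2)"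
    by (intro sum_mono2) (auto simp: A_def units_mod_def)
  finally show ?thesis
    unfolding A_def .
qed

lemma card_large_gauss_sum_div_totient_le:
  assumes "q > 0" "\<delta> > 0" "\<eta> \<ge> 0" "num_divisors q \<le> N"
    and moment: "(\<Sum>p\<in>{1..q}. (norm (gauss_sum f p q))\<^sup>2) \<le> 2 * (real q)\<^sup>2 * real (num_divisors q) * \<eta>"
  shows "real (card {p \<in> units_mod q. norm (gauss_sum f p q) / sqrt (real q) > \<delta>}) / real (totient q)
    \<le> 2 * (real N)\<^sup>2 * \<eta> / \<delta>\<^sup>2"
proof -
  define a where "a = real (card {p \<in> units_mod q. norm (gauss_sum f p q) / sqrt (real q) > \<delta>})"
  define t where "t = real (totient q)"
  define d where "d = real (num_divisors q)"
  have "a * \<delta>\<^sup>2 * real q \<le> (2 * real q * d * \<eta>) * real q"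
    using card_large_gauss_sum_le[OF assms(1,2), of f] moment
    by (simp add: a_def d_def power2_eq_square mult_ac)
  then have "a * \<delta>\<^sup>2 \<le> 2 * real q * d * \<eta>"
    using assms(1) by (simp add: mult_ac)
  also have "\<dots> \<le> 2 * (t * d) * d * \<eta>"
    using le_totient_mult_num_divisors[OF assms(1)] assms(3)
    by (intro mult_right_mono) (simp_all add: t_def d_def)
  also have "\<dots> = 2 * t * d\<^sup>2 * \<eta>"
    by (simp add: power2_eq_square mult_ac)
  also have "\<dots> \<le> 2 * t * (real N)\<^sup>2 * \<eta>"
    using assms(3,4) by (intro mult_right_mono mult_left_mono power_mono) (simp_all add: d_def t_def)
  finally have "a * \<delta>\<^sup>2 \<le> 2 * t * (real N)\<^sup>2 * \<eta>" .
  moreover have "t > 0"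
    using assms(1) by (simp add: t_def)
  ultimately show ?thesis
    using assms(2) unfolding a_def[symmetric] t_def[symmetric] by (simp add: field_simps)
qed

lemma eventually_card_large_gauss_sum_div_totient_le:
  fixes f :: "real \<Rightarrow> complex"
  assumes "\<delta> > 0" "\<eta> > 0"
    and "eventually (\<lambda>Q. (\<Sum>j<Q. (norm (f (real j / real Q)))\<^sup>2) \<le> \<eta> * real Q) sequentially"
  shows "eventually (\<lambda>q. real (card {p \<in> units_mod q. norm (gauss_sum f p q) / sqrt (real q) > \<delta>}) / real (totient q)
    \<le> 2 * (real N)\<^sup>2 * \<eta> / \<delta>\<^sup>2) (inf sequentially (principal {q. num_divisors q \<le> N}))"
proof -
  obtain Q0 where grid: "\<And>Q. Q0 \<le> Q \<Longrightarrow> (\<Sum>j<Q. (norm (f (real j / real Q)))\<^sup>2) \<le> \<eta> * real Q"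
    using assms(3) unfolding eventually_sequentially by blast
  show ?thesis
    unfolding eventually_inf_principal eventually_sequentially
  proof (intro exI[of _ "Suc (Q0 * Q0)"] allI impI)
    fix q assume "Suc (Q0 * Q0) \<le> q" "q \<in> {q. num_divisors q \<le> N}"
    then have q: "q > 0" "Q0 * Q0 \<le> q" "num_divisors q \<le> N"
      by auto
    show "real (card {p \<in> units_mod q. norm (gauss_sum f p q) / sqrt (real q) > \<delta>}) / real (totient q)
        \<le> 2 * (real N)\<^sup>2 * \<eta> / \<delta>\<^sup>2"
      using sum_norm_gauss_sum_sq_le_of_grid_bound[OF q(1,2) grid] q assms(1,2)
      by (intro card_large_gauss_sum_div_totient_le) auto
  qed
qed

theorem lemma6p2:
  fixes N :: nat and \<phi> :: "real \<Rightarrow> complex" and \<epsilon> \<delta> :: real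
  assumes "N > 0"
    and "on_torus \<phi>" and "riemann_integrable_torus \<phi>"
    and "\<epsilon> > 0" and "\<delta> > 0"
  shows "\<exists>\<psi>\<in>B_torus.
     Limsup (inf sequentially (principal {q. num_divisors q \<le> N}))
       (\<lambda>q. ereal (card {p \<in> units_mod q. norm (gauss_sum \<phi> p q - gauss_sum \<psi> p q) / sqrt (real q) > \<delta>} / real (totient q)))
       < ereal \<epsilon>"
proof -
  define \<eta> where "\<eta> = \<epsilon> * \<delta>\<^sup>2 / (4 * (real N)\<^sup>2)"
  have "\<eta> > 0"
    using assms by (simp add: \<eta>_def)
  obtain \<psi> where "trig_poly \<psi>"
    and approx: "eventually (\<lambda>Q. (\<Sum>j<Q. (norm (\<phi> (real j / real Q) - \<psi> (real j / real Q)))\<^sup>2) \<le> \<eta> * real Q) sequentially"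
    by (rule riemann_integrable_torus_grid_approx_trig_poly[OF assms(3) \<open>\<eta> > 0\<close>]) (rule that)
  from eventually_card_large_gauss_sum_div_totient_le[where f = "\<lambda>x. \<phi> x - \<psi> x", OF assms(5) \<open>\<eta> > 0\<close> approx]
  have "Limsup (inf sequentially (principal {q. num_divisors q \<le> N}))
      (\<lambda>q. ereal (card {p \<in> units_mod q. norm (gauss_sum \<phi> p q - gauss_sum \<psi> p q) / sqrt (real q) > \<delta>} / real (totient q)))
      \<le> ereal (2 * (real N)\<^sup>2 * \<eta> / \<delta>\<^sup>2)"
    by (intro Limsup_bounded) (auto simp: gauss_sum_diff elim: eventually_mono)
  also have "2 * (real N)\<^sup>2 * \<eta> / \<delta>\<^sup>2 = \<epsilon> / 2"
    using assms by (simp add: \<eta>_def field_simps)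
  also have "ereal (\<epsilon> / 2) < ereal \<epsilon>"
    using assms(4) by simp
  finally show ?thesis
    using trig_poly_in_B_torus[OF \<open>trig_poly \<psi>\<close>] by blast
qed

end
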